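(* Let $\mathcal P$ and $\mathrm{conv}(\mathcal P)$ be as in the context. Let $k\in[1,T-1]_{\mathbb Z}$ with $\overline C-\underline C-kV>0$, $m\in[0,k-1]_{\mathbb Z}$, and $\mathcal S\subseteq[0,\min\{k-1,L-m-2\}]_{\mathbb Z}$. For any $t\in[k+1,T-m-1]_{\mathbb Z}$, the inequality $$x_t-x_{t-k}\le(\underline C+(k-m)V-\overline V)y_{t+m+1}+V\sum_{i=1}^m y_{t+i}+\overline V y_t-\underline C y_{t-k}-\sum_{s\in\mathcal S}(\underline C+(k-s)V-\overline V)(y_{t-s}-y_{t-s-1})$$ is valid and facet-defining for $\mathrm{conv}(\mathcal P)$. For any $t\in[m+2,T-k]_{\mathbb Z}$, the inequality $$x_t-x_{t+k}\le(\underline C+(k-m)V-\overline V)y_{t-m-1}+V\sum_{i=1}^m y_{t-i}+\overline V y_t-\underline C y_{t+k}-\sum_{s\in\mathcal S}(\underline C+(k-s)V-\overline V)(y_{t+s}-y_{t+s+1})$$ is valid and facet-defining for $\mathrm{conv}(\mathcal P)$.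
   Context: For integers $a,b$, $[a,b]_{\mathbb Z}=\{a,a+1,\dots,b\}$ if $a\le b$ and $\emptyset$ otherwise. Fix a positive integer $T$, positive integers $L$ (minimum up time) and $\ell$ (minimum down time), and reals $\overline C,\underline C,V,\overline V$ with $\overline C>\underline C>0$, $V>0$, $\overline V+V\le\overline C$ and $\underline C<\overline V<\underline C+V$. $\mathcal P$ is the set of $(\mathbf x,\mathbf y)=((x_1,\dots,x_T),(y_1,\dots,y_T))\in\mathbb R_+^T\times\{0,1\}^T$ satisfying: (i) $-y_{t-1}+y_t-y_k\le 0$ for all $t\in[2,T]_{\mathbb Z}$, $k\in[t,\min\{T,t+L-1\}]_{\mathbb Z}$; (ii) $y_{t-1}-y_t+y_k\le 1$ for all $t\in[2,T]_{\mathbb Z}$, $k\in[t,\min\{T,t+\ell-1\}]_{\mathbb Z}$; (iii) $-x_t+\underline C y_t\le 0$ and $x_t-\overline C y_t\le 0$ for all $t\in[1,T]_{\mathbb Z}$; (iv) $x_t-x_{t-1}\le Vy_{t-1}+\overline V(1-y_{t-1})$ for all $t\in[2,T]_{\mathbb Z}$; (v) $x_{t-1}-x_t\le Vy_t+\overline V(1-y_t)$ for all $t\in[2,T]_{\mathbb Z}$. $\mathrm{conv}(\mathcal P)\subseteq\mathbb R^{2T}$ is its convex hull. A linear inequality is valid for $\mathrm{conv}(\mathcal P)$ if all its points satisfy it, and facet-defining if moreover the set of points of $\mathrm{conv}(\mathcal P)$ satisfying it with equality has dimension $\dim\mathrm{conv}(\mathcal P)-1$. *)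

theory Defs
  imports "HOL-Analysis.Analysis"
begin

text \<open>Points of R^(2T) are pairs (x, y) of vectors in real^'n with T = CARD('n);
  the coordinates are numbered 1..T via a bijection ix from {1..T} onto the index type.\<close>

definition xc :: "(nat \<Rightarrow> 'n::finite) \<Rightarrow> (real^'n) \<times> (real^'n) \<Rightarrow> nat \<Rightarrow> real" where
  "xc ix p t = fst p $ ix t"

definition yc :: "(nat \<Rightarrow> 'n::finite) \<Rightarrow> (real^'n) \<times> (real^'n) \<Rightarrow> nat \<Rightarrow> real" where
  "yc ix p t = snd p $ ix t"

text \<open>The set P (unit commitment polytope points) with minimum up time L, minimum down time l,
  capacities Cb (upper) and Cu (lower), ramping V, start-up/shut-down ramping Vb.\<close>

definition UCP :: "(nat \<Rightarrow> 'n::finite) \<Rightarrow> nat \<Rightarrow> nat \<Rightarrow> real \<Rightarrow> real \<Rightarrow> real \<Rightarrow> real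
    \<Rightarrow> ((real^'n) \<times> (real^'n)) set" where
  "UCP ix L l Cb Cu V Vb = {p.
     (let T = CARD('n); x = xc ix p; y = yc ix p in
       (\<forall>t\<in>{1..T}. x t \<ge> 0 \<and> y t \<in> {0, 1}) \<and>
       (\<forall>t\<in>{2..T}. \<forall>k\<in>{t..T}. k \<le> t + L - 1 \<longrightarrow> - y (t - 1) + y t - y k \<le> 0) \<and>
       (\<forall>t\<in>{2..T}. \<forall>k\<in>{t..T}. k \<le> t + l - 1 \<longrightarrow> y (t - 1) - y t + y k \<le> 1) \<and>
       (\<forall>t\<in>{1..T}. - x t + Cu * y t \<le> 0 \<and> x t - Cb * y t \<le> 0) \<and>
       (\<forall>t\<in>{2..T}. x t - x (t - 1) \<le> V * y (t - 1) + Vb * (1 - y (t - 1))) \<and>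
       (\<forall>t\<in>{2..T}. x (t - 1) - x t \<le> V * y t + Vb * (1 - y t)))}"

definition valid_facet :: "('a::euclidean_space) set \<Rightarrow> ('a \<Rightarrow> real) \<Rightarrow> ('a \<Rightarrow> real) \<Rightarrow> bool" where
  "valid_facet K a b \<longleftrightarrow> (\<forall>p\<in>K. a p \<le> b p) \<and> aff_dim {p\<in>K. a p = b p} = aff_dim K - 1"

end

theory Submission
  imports Defs
begin

(*
  Fix t and look at the commitment status around the window [t - k, t + m + 1].
  If the unit is off at t, every start-up term in the sum over S is nonpositive, since a
  start-up at t - s with s + 1 < L would keep the unit on at t. If it starts up at t - sigma
  for some sigma in S, the minimum up time keeps it on through t + m + 1 and rules out every
  other start-up counted by S, and ramping up from the start-up gives x_t <= Vb + sigma V.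
  Otherwise the sum over S is nonpositive and x_t is bounded by ramping down to the first
  shut-down after t, by ramping up from the last start-up after t - k, or by ramping across
  the whole window.

  Both sides are linear and 0 is in P, so the inequality defines a facet of conv P as
  soon as its tight points in P span its hyperplane. Schedules that are on up to some period
  and off afterwards, or off and then on, are feasible whenever their outputs respect capacity
  and ramping; choosing such schedules tight and taking differences produces every unit vector
  in the y-coordinates, every unit vector in the x-coordinates except those of t and t - k,
  and the all-ones vector in the x-coordinates.

  The second family is the image of the first under the time reversal t |-> T + 1 - t,
  a linear bijection that maps P onto itself.
*)

(* The set P as a predicate on sequences indexed by 1..T. The minimum down time constraint
   for y is the minimum up time constraint for the off-indicator 1 - y. *)
definition min_up :: "nat \<Rightarrow> nat \<Rightarrow> (nat \<Rightarrow> real) \<Rightarrow> bool" where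
  "min_up T D z \<longleftrightarrow>
     (\<forall>t\<in>{2..T}. \<forall>k\<in>{t..T}. k \<le> t + D - 1 \<longrightarrow> z (t - 1) = 0 \<longrightarrow> z t = 1 \<longrightarrow> z k = 1)"

definition unit_commitment ::
    "nat \<Rightarrow> nat \<Rightarrow> nat \<Rightarrow> real \<Rightarrow> real \<Rightarrow> real \<Rightarrow> real \<Rightarrow> (nat \<Rightarrow> real) \<Rightarrow> (nat \<Rightarrow> real) \<Rightarrow> bool"
  where
  "unit_commitment T L l Cb Cu V Vb x y \<longleftrightarrow>
     (\<forall>t\<in>{1..T}. 0 \<le> x t \<and> y t \<in> {0, 1}) \<and>
     min_up T L y \<and> min_up T l (\<lambda>t. 1 - y t) \<and>
     (\<forall>t\<in>{1..T}. Cu * y t \<le> x t \<and> x t \<le> Cb * y t) \<and>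
     (\<forall>t\<in>{2..T}. x t - x (t - 1) \<le> V * y (t - 1) + Vb * (1 - y (t - 1))) \<and>
     (\<forall>t\<in>{2..T}. x (t - 1) - x t \<le> V * y t + Vb * (1 - y t))"

lemma min_up_iff_inequalities:
  assumes "\<forall>t\<in>{1..T}. z t \<in> {0, 1}"
  shows "min_up T D z \<longleftrightarrow>
    (\<forall>t\<in>{2..T}. \<forall>k\<in>{t..T}. k \<le> t + D - 1 \<longrightarrow> - z (t - 1) + z t - z k \<le> 0)"
proof -
  have "- z (t - 1) + z t - z k \<le> 0 \<longleftrightarrow> (z (t - 1) = 0 \<longrightarrow> z t = 1 \<longrightarrow> z k = 1)"
    if "t \<in> {2..T}" "k \<in> {t..T}" for t k
  proof -
    have "t - 1 \<in> {1..T}" "t \<in> {1..T}" "k \<in> {1..T}"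
      using that by auto
    then have "z (t - 1) \<in> {0, 1}" "z t \<in> {0, 1}" "z k \<in> {0, 1}"
      using assms by blast+
    then show ?thesis by auto
  qed
  then show ?thesis
    unfolding min_up_def by (meson atLeastAtMost_iff)
qed

lemma mem_UCP_iff:
  "p \<in> UCP ix L l Cb Cu V Vb \<longleftrightarrow> unit_commitment CARD('n) L l Cb Cu V Vb (xc ix p) (yc ix p)"
  for ix :: "nat \<Rightarrow> 'n::finite"
proof -
  let ?T = "CARD('n)" and ?y = "yc ix p"
  have "min_up ?T L ?y \<longleftrightarrow>
      (\<forall>t\<in>{2..?T}. \<forall>k\<in>{t..?T}. k \<le> t + L - 1 \<longrightarrow> - ?y (t - 1) + ?y t - ?y k \<le> 0)"
    if "\<forall>t\<in>{1..?T}. ?y t \<in> {0, 1}"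
    using that by (rule min_up_iff_inequalities)
  moreover have "min_up ?T l (\<lambda>t. 1 - ?y t) \<longleftrightarrow>
      (\<forall>t\<in>{2..?T}. \<forall>k\<in>{t..?T}. k \<le> t + l - 1 \<longrightarrow> ?y (t - 1) - ?y t + ?y k \<le> 1)"
    if "\<forall>t\<in>{1..?T}. ?y t \<in> {0, 1}"
  proof -
    have "\<forall>t\<in>{1..?T}. 1 - ?y t \<in> {0, 1}"
      using that by auto
    then show ?thesis
      by (simp add: min_up_iff_inequalities algebra_simps)
  qed
  ultimately show ?thesis
    unfolding UCP_def unit_commitment_def Let_def mem_Collect_eq by (auto 0 3)
qed

lemma first_switch_off:
  fixes P :: "nat \<Rightarrow> bool"
  assumes "P a" "\<not> P b" "a < b"
  obtains j where "a \<le> j" "j < b" "\<forall>i\<in>{a..j}. P i" "\<not> P (j + 1)"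
proof -
  obtain d where d: "d < b - a" "\<forall>i\<le>d. P (a + i)" "\<not> P (a + Suc d)"
    using ex_least_nat_less[of "\<lambda>i. \<not> P (a + i)" "b - a"] assms by auto
  have "P i" if "a \<le> i" "i \<le> a + d" for i
    using d(2)[rule_format, of "i - a"] that by simp
  with d show thesis
    by (intro that[of "a + d"]) auto
qed

lemma last_switch_on:
  fixes P :: "nat \<Rightarrow> bool"
  assumes "\<not> P a" "P b" "a < b"
  obtains j where "a < j" "j \<le> b" "\<not> P (j - 1)" "\<forall>i\<in>{j..b}. P i"
proof -
  obtain d where d: "d < b - a" "\<forall>i\<le>d. P (b - i)" "\<not> P (b - Suc d)"
    using ex_least_nat_less[of "\<lambda>i. \<not> P (b - i)" "b - a"] assms by auto
  have "P i" if "b - d \<le> i" "i \<le> b" for i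
    using d(2)[rule_format, of "b - i"] that by simp
  with d show thesis
    by (intro that[of "b - d"]) (auto simp: Suc_diff_Suc)
qed

lemma min_up_persists:
  assumes "min_up T D z" "\<forall>i\<in>{1..T}. z i \<in> {0, 1}"
    and "1 \<le> p" "p < q" "z p = 0" "z q = 1" "q \<le> r" "r \<le> p + D" "r \<le> T"
  shows "z r = 1"
proof -
  obtain j where j: "p < j" "j \<le> q" "z (j - 1) \<noteq> 1" "\<forall>i\<in>{j..q}. z i = 1"
    using last_switch_on[of "\<lambda>i. z i = 1" p q] assms by auto
  have "j - 1 \<in> {1..T}"
    using j assms by auto
  then have "z (j - 1) = 0"
    using j(3) assms(2) by blast
  moreover have "j \<in> {2..T}" "r \<in> {j..T}" "r \<le> j + D - 1" "z j = 1"
    using j assms by auto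
  ultimately show ?thesis
    using assms(1) unfolding min_up_def by blast
qed

lemma min_up_reverse:
  assumes min_up: "min_up T D z" and binary: "\<forall>i\<in>{1..T}. z i \<in> {0, 1}"
  shows "min_up T D (\<lambda>t. z (T + 1 - t))"
  unfolding min_up_def
proof (intro ballI impI)
  fix t k
  assume t: "t \<in> {2..T}" and k: "k \<in> {t..T}" "k \<le> t + D - 1"
    and off: "z (T + 1 - (t - 1)) = 0" and on: "z (T + 1 - t) = 1"
  show "z (T + 1 - k) = 1"
  proof (rule ccontr)
    assume "z (T + 1 - k) \<noteq> 1"
    moreover have "T + 1 - k \<in> {1..T}"
      using k t by auto
    ultimately have "z (T + 1 - k) = 0" "k \<noteq> t"
      using binary on by auto
    then have "z (T + 1 - (t - 1)) = 1"
      using min_up_persists[OF min_up binary, of "T + 1 - k" "T + 1 - t"] on t k by auto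
    with off show False
      by simp
  qed
qed

lemma unit_commitment_reverse:
  assumes "unit_commitment T L l Cb Cu V Vb x y"
  shows "unit_commitment T L l Cb Cu V Vb (\<lambda>t. x (T + 1 - t)) (\<lambda>t. y (T + 1 - t))"
proof -
  note uc = assms[unfolded unit_commitment_def]
  have binary: "\<forall>i\<in>{1..T}. y i \<in> {0, 1}" and one_minus_binary: "\<forall>i\<in>{1..T}. 1 - y i \<in> {0, 1}"
    using uc by auto
  have mirror: "T + 1 - t \<in> {1..T}" if "t \<in> {1..T}" for t
    using that by auto
  have mirror_step: "T + 1 - (t - 1) \<in> {2..T}" "T + 1 - t = T + 1 - (t - 1) - 1"
    if "t \<in> {2..T}" for t
    using that by auto
  have "min_up T L (\<lambda>t. y (T + 1 - t))"
    using uc binary by (intro min_up_reverse) auto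
  moreover have "min_up T l (\<lambda>t. 1 - y (T + 1 - t))"
    using min_up_reverse[of T l "\<lambda>t. 1 - y t"] uc one_minus_binary by auto
  moreover have "\<forall>t\<in>{2..T}. x (T + 1 - t) - x (T + 1 - (t - 1))
      \<le> V * y (T + 1 - (t - 1)) + Vb * (1 - y (T + 1 - (t - 1)))"
    and "\<forall>t\<in>{2..T}. x (T + 1 - (t - 1)) - x (T + 1 - t)
      \<le> V * y (T + 1 - t) + Vb * (1 - y (T + 1 - t))"
    using uc mirror_step by metis+
  ultimately show ?thesis
    using uc mirror unfolding unit_commitment_def by blast
qed

lemma min_up_cong:
  assumes "\<forall>j\<in>{1..T}. z' j = z j"
  shows "min_up T D z' \<longleftrightarrow> min_up T D z"
proof -
  have "z' (t - 1) = z (t - 1) \<and> z' t = z t \<and> z' k = z k" if "t \<in> {2..T}" "k \<in> {t..T}" for t k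
  proof -
    have "t - 1 \<in> {1..T}" "t \<in> {1..T}" "k \<in> {1..T}"
      using that by auto
    then show ?thesis
      using assms by simp
  qed
  then show ?thesis
    unfolding min_up_def by auto
qed

lemma unit_commitment_cong:
  assumes "\<forall>j\<in>{1..T}. X' j = X j" "\<forall>j\<in>{1..T}. Y' j = Y j"
  shows "unit_commitment T L l Cb Cu V Vb X' Y' \<longleftrightarrow> unit_commitment T L l Cb Cu V Vb X Y"
proof -
  have "min_up T L Y' = min_up T L Y" "min_up T l (\<lambda>t. 1 - Y' t) = min_up T l (\<lambda>t. 1 - Y t)"
    using min_up_cong[OF assms(2)] min_up_cong[of T "\<lambda>t. 1 - Y' t" "\<lambda>t. 1 - Y t"] assms(2)
    by simp_all
  moreover have "X' (t - 1) = X (t - 1) \<and> X' t = X t \<and> Y' (t - 1) = Y (t - 1) \<and> Y' t = Y t"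
    if "t \<in> {2..T}" for t
  proof -
    have "t - 1 \<in> {1..T}" "t \<in> {1..T}"
      using that by auto
    then show ?thesis
      using assms by simp
  qed
  ultimately show ?thesis
    using assms unfolding unit_commitment_def by auto
qed

lemma min_up_if_monotone:
  assumes binary: "\<forall>i\<in>{1..T}. z i \<in> {0, 1}" and "mono_on {1..T} z \<or> antimono_on {1..T} z"
  shows "min_up T D z"
  unfolding min_up_def
proof (intro ballI impI)
  fix t k assume t: "t \<in> {2..T}" and k: "k \<in> {t..T}" and off_on: "z (t - 1) = 0" "z t = 1"
  have indices: "t - 1 \<in> {1..T}" "t \<in> {1..T}" "k \<in> {1..T}"
    using t k by auto
  have "z t \<le> z k"
  proof (cases "mono_on {1..T} z")
    case True
    show ?thesis
      using k by (intro mono_onD[OF True indices(2,3)]) simp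
  next
    case False
    then have "antimono_on {1..T} z"
      using assms(2) by blast
    from monotone_onD[OF this indices(1,2)] have "z t \<le> z (t - 1)"
      by simp
    then show ?thesis
      using off_on by simp
  qed
  then show "z k = 1"
    using binary indices(3) off_on by fastforce
qed

definition on_until :: "nat \<Rightarrow> nat \<Rightarrow> real" where
  "on_until b j = (if j \<le> b then 1 else 0)"

definition on_from :: "nat \<Rightarrow> nat \<Rightarrow> real" where
  "on_from a j = (if a \<le> j then 1 else 0)"

lemma sum_on_until_shift:
  assumes "t \<le> b" "b \<le> t + m"
  shows "(\<Sum>i=1..m. on_until b (t + i)) = real (b - t)"
proof -
  have "{1..m} = {1..b - t} \<union> {b - t + 1..m}"
    using assms by auto
  then have "(\<Sum>i=1..m. on_until b (t + i))
      = (\<Sum>i=1..b - t. on_until b (t + i)) + (\<Sum>i=b - t + 1..m. on_until b (t + i))"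
    by (simp add: sum.union_disjoint)
  also have "(\<Sum>i=1..b - t. on_until b (t + i)) = (\<Sum>i=1..b - t. 1)"
    by (intro sum.cong) (auto simp: on_until_def)
  also have "(\<Sum>i=b - t + 1..m. on_until b (t + i)) = 0"
    by (intro sum.neutral) (auto simp: on_until_def)
  finally show ?thesis
    by simp
qed

lemma unit_commitment_monotone:
  assumes binary: "\<forall>i\<in>{1..T}. Y i \<in> {0, 1}"
    and monotone: "mono_on {1..T} Y \<or> antimono_on {1..T} Y"
    and off: "\<forall>i\<in>{1..T}. Y i = 0 \<longrightarrow> X i = 0"
    and on: "\<forall>i\<in>{1..T}. Y i = 1 \<longrightarrow> Cu \<le> X i \<and> X i \<le> Cb"
    and ramp: "\<forall>i\<in>{2..T}. Y (i - 1) = 1 \<longrightarrow> Y i = 1 \<longrightarrow> \<bar>X i - X (i - 1)\<bar> \<le> V"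
    and startup: "\<forall>i\<in>{2..T}. Y (i - 1) = 0 \<longrightarrow> X i \<le> Vb"
    and shutdown: "\<forall>i\<in>{2..T}. Y i = 0 \<longrightarrow> X (i - 1) \<le> Vb"
    and nonneg: "0 \<le> Cu" "0 \<le> V" "0 \<le> Vb"
  shows "unit_commitment T L l Cb Cu V Vb X Y"
proof -
  have bounds: "0 \<le> X i \<and> Cu * Y i \<le> X i \<and> X i \<le> Cb * Y i" if "i \<in> {1..T}" for i
  proof -
    have "Y i = 0 \<or> Y i = 1"
      using binary that by blast
    then show ?thesis
      using off on nonneg that by auto
  qed
  have "min_up T L Y"
    using binary monotone by (rule min_up_if_monotone)
  moreover have "min_up T l (\<lambda>t. 1 - Y t)"
  proof (rule min_up_if_monotone)
    show "\<forall>i\<in>{1..T}. 1 - Y i \<in> {0, 1}"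
      using binary by auto
    show "mono_on {1..T} (\<lambda>t. 1 - Y t) \<or> antimono_on {1..T} (\<lambda>t. 1 - Y t)"
      using monotone by (auto simp: monotone_on_def)
  qed
  moreover have "X i - X (i - 1) \<le> V * Y (i - 1) + Vb * (1 - Y (i - 1)) \<and>
      X (i - 1) - X i \<le> V * Y i + Vb * (1 - Y i)" if i: "i \<in> {2..T}" for i
  proof -
    have indices: "i - 1 \<in> {1..T}" "i \<in> {1..T}"
      using i by auto
    then have "Y (i - 1) \<in> {0, 1}" "Y i \<in> {0, 1}" "0 \<le> X (i - 1)" "0 \<le> X i"
      using binary bounds by blast+
    moreover have "Y (i - 1) = 0 \<Longrightarrow> X (i - 1) = 0" "Y i = 0 \<Longrightarrow> X i = 0"
      using off indices by blast+
    ultimately show ?thesis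
      using ramp[rule_format, OF i] startup[rule_format, OF i] shutdown[rule_format, OF i] nonneg
      by auto
  qed
  ultimately show ?thesis
    unfolding unit_commitment_def using bounds binary by blast
qed

lemma unit_commitment_on_until:
  assumes off: "\<forall>i\<in>{1..T}. b < i \<longrightarrow> X i = 0"
    and on: "\<forall>i\<in>{1..T}. i \<le> b \<longrightarrow> Cu \<le> X i \<and> X i \<le> Cb"
    and ramp: "\<forall>i\<in>{2..T}. i \<le> b \<longrightarrow> \<bar>X i - X (i - 1)\<bar> \<le> V"
    and shutdown: "1 \<le> b \<longrightarrow> b < T \<longrightarrow> X b \<le> Vb"
    and nonneg: "0 \<le> Cu" "0 \<le> V" "0 \<le> Vb"
  shows "unit_commitment T L l Cb Cu V Vb X (on_until b)"
proof (rule unit_commitment_monotone)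
  show "mono_on {1..T} (on_until b) \<or> antimono_on {1..T} (on_until b)"
    by (auto simp: monotone_on_def on_until_def)
  show "\<forall>i\<in>{2..T}. on_until b i = 0 \<longrightarrow> X (i - 1) \<le> Vb"
  proof (intro ballI impI)
    fix i assume i: "i \<in> {2..T}" "on_until b i = 0"
    show "X (i - 1) \<le> Vb"
    proof (cases "i - 1 = b")
      case False
      then have "b < i - 1" "i - 1 \<in> {1..T}"
        using i by (auto simp: on_until_def split: if_splits)
      then show ?thesis
        using off[rule_format, of "i - 1"] nonneg by simp
    qed (use shutdown i in \<open>auto simp: on_until_def\<close>)
  qed
qed (use off on ramp nonneg in \<open>auto simp: on_until_def\<close>)

lemma unit_commitment_on_from:
  assumes off: "\<forall>i\<in>{1..T}. i < a \<longrightarrow> X i = 0"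
    and on: "\<forall>i\<in>{1..T}. a \<le> i \<longrightarrow> Cu \<le> X i \<and> X i \<le> Cb"
    and ramp: "\<forall>i\<in>{2..T}. a < i \<longrightarrow> \<bar>X i - X (i - 1)\<bar> \<le> V"
    and startup: "2 \<le> a \<longrightarrow> a \<le> T \<longrightarrow> X a \<le> Vb"
    and nonneg: "0 \<le> Cu" "0 \<le> V" "0 \<le> Vb"
  shows "unit_commitment T L l Cb Cu V Vb X (on_from a)"
proof (rule unit_commitment_monotone)
  show "mono_on {1..T} (on_from a) \<or> antimono_on {1..T} (on_from a)"
    by (auto simp: monotone_on_def on_from_def)
  show "\<forall>i\<in>{2..T}. on_from a (i - 1) = 0 \<longrightarrow> X i \<le> Vb"
  proof (intro ballI impI)
    fix i assume i: "i \<in> {2..T}" "on_from a (i - 1) = 0"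
    show "X i \<le> Vb"
    proof (cases "i = a")
      case False
      then have "i < a" "i \<in> {1..T}"
        using i by (auto simp: on_from_def split: if_splits)
      then show ?thesis
        using off[rule_format, of i] nonneg by simp
    qed (use startup i in \<open>auto simp: on_from_def\<close>)
  qed
  show "\<forall>i\<in>{2..T}. on_from a i = 0 \<longrightarrow> X (i - 1) \<le> Vb"
  proof (intro ballI impI)
    fix i assume "i \<in> {2..T}" "on_from a i = 0"
    then have "i - 1 < a" "i - 1 \<in> {1..T}"
      by (auto simp: on_from_def split: if_splits)
    then show "X (i - 1) \<le> Vb"
      using off[rule_format, of "i - 1"] nonneg by simp
  qed
qed (use off on ramp nonneg in \<open>auto simp: on_from_def\<close>)

lemma unit_commitment_always_on:
  assumes "\<forall>i\<in>{1..T}. Cu \<le> X i \<and> X i \<le> Cb" "\<forall>i\<in>{2..T}. \<bar>X i - X (i - 1)\<bar> \<le> V"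
    and "0 \<le> Cu" "0 \<le> V" "0 \<le> Vb"
  shows "unit_commitment T L l Cb Cu V Vb X (\<lambda>_. 1)"
  by (rule unit_commitment_monotone) (use assms in \<open>auto simp: monotone_on_def\<close>)

lemma unit_commitment_always_off:
  "0 \<le> Cu \<Longrightarrow> 0 \<le> V \<Longrightarrow> 0 \<le> Vb \<Longrightarrow> unit_commitment T L l Cb Cu V Vb (\<lambda>_. 0) (\<lambda>_. 0)"
  by (rule unit_commitment_monotone) (auto simp: monotone_on_def)

locale commitment =
  fixes T L l :: nat and Cb Cu V Vb :: real and x y :: "nat \<Rightarrow> real"
  assumes feasible: "unit_commitment T L l Cb Cu V Vb x y"
begin

lemma binary: "i \<in> {1..T} \<Longrightarrow> y i = 0 \<or> y i = 1"
  using feasible unfolding unit_commitment_def by auto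

lemma output_bounds: "i \<in> {1..T} \<Longrightarrow> Cu * y i \<le> x i \<and> x i \<le> Cb * y i"
  using feasible unfolding unit_commitment_def by auto

lemma output_off: "i \<in> {1..T} \<Longrightarrow> y i = 0 \<Longrightarrow> x i = 0"
  using output_bounds[of i] by auto

lemma ramp_up_on: "i \<in> {2..T} \<Longrightarrow> y (i - 1) = 1 \<Longrightarrow> x i - x (i - 1) \<le> V"
  and startup_ramp: "i \<in> {2..T} \<Longrightarrow> y (i - 1) = 0 \<Longrightarrow> x i - x (i - 1) \<le> Vb"
  and ramp_down_on: "i \<in> {2..T} \<Longrightarrow> y i = 1 \<Longrightarrow> x (i - 1) - x i \<le> V"
  and shutdown_ramp: "i \<in> {2..T} \<Longrightarrow> y i = 0 \<Longrightarrow> x (i - 1) - x i \<le> Vb"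
  using feasible unfolding unit_commitment_def by fastforce+

lemma stays_on:
  "1 \<le> p \<Longrightarrow> p < q \<Longrightarrow> y p = 0 \<Longrightarrow> y q = 1 \<Longrightarrow> q \<le> r \<Longrightarrow> r \<le> p + L \<Longrightarrow> r \<le> T \<Longrightarrow> y r = 1"
  using feasible min_up_persists[of T L y p q r] unfolding unit_commitment_def by blast

lemma output_after_startup:
  "2 \<le> r \<Longrightarrow> r \<le> q \<Longrightarrow> q \<le> T \<Longrightarrow> y (r - 1) = 0 \<Longrightarrow> \<forall>i\<in>{r..q}. y i = 1
    \<Longrightarrow> x q \<le> Vb + real (q - r) * V"
proof (induction q)
  case (Suc q)
  show ?case
  proof (cases "r = Suc q")
    case True
    then show ?thesis
      using startup_ramp[of "Suc q"] output_off[of q] Suc.prems by auto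
  next
    case False
    then have "r \<le> q" "x (Suc q) - x q \<le> V"
      using ramp_up_on[of "Suc q"] Suc.prems by auto
    then show ?thesis
      using Suc by (simp add: Suc_diff_le algebra_simps)
  qed
qed simp

lemma output_before_shutdown:
  "1 \<le> q \<Longrightarrow> q \<le> r \<Longrightarrow> r + 1 \<le> T \<Longrightarrow> y (r + 1) = 0 \<Longrightarrow> \<forall>i\<in>{q..r}. y i = 1
    \<Longrightarrow> x q \<le> Vb + real (r - q) * V"
proof (induction "r - q" arbitrary: q)
  case 0
  then show ?case
    using shutdown_ramp[of "r + 1"] output_off[of "r + 1"] by auto
next
  case (Suc d)
  have "x (q + 1) \<le> Vb + real (r - (q + 1)) * V" "x q - x (q + 1) \<le> V"
    using Suc.hyps(1)[of "q + 1"] Suc.hyps(2) Suc.prems ramp_down_on[of "q + 1"] by auto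
  then show ?case
    using Suc.hyps(2) by (simp add: algebra_simps of_nat_diff)
qed

lemma output_after_off:
  assumes "1 \<le> q" "q < r" "r \<le> T" "y q \<noteq> 1" "y r = 1" and V: "0 \<le> V"
  shows "x r \<le> Vb + real (r - q - 1) * V"
proof -
  obtain j where j: "q < j" "j \<le> r" "y (j - 1) \<noteq> 1" "\<forall>i\<in>{j..r}. y i = 1"
    using last_switch_on[of "\<lambda>i. y i = 1" q r] assms by blast
  have "j - 1 \<in> {1..T}"
    using j assms by auto
  then have "y (j - 1) = 0"
    using binary j(3) by blast
  then have "x r \<le> Vb + real (r - j) * V"
    using output_after_startup[of j r] j assms by auto
  also have "\<dots> \<le> Vb + real (r - q - 1) * V"
    using j V by (intro add_left_mono mult_right_mono) auto
  finally show ?thesis .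
qed

lemma output_change_while_on:
  "1 \<le> p \<Longrightarrow> p \<le> q \<Longrightarrow> q \<le> T \<Longrightarrow> \<forall>i\<in>{p..q}. y i = 1 \<Longrightarrow> x q - x p \<le> real (q - p) * V"
proof (induction q)
  case (Suc q)
  show ?case
  proof (cases "p = Suc q")
    case False
    then have "p \<le> q" "x (Suc q) - x q \<le> V"
      using ramp_up_on[of "Suc q"] Suc.prems by auto
    then show ?thesis
      using Suc by (simp add: Suc_diff_le algebra_simps)
  qed simp
qed simp

end

definition ramp_rhs ::
    "real \<Rightarrow> real \<Rightarrow> real \<Rightarrow> nat \<Rightarrow> nat \<Rightarrow> nat set \<Rightarrow> nat \<Rightarrow> (nat \<Rightarrow> real) \<Rightarrow> real" where
  "ramp_rhs Cu V Vb k m S t y = (Cu + real (k - m) * V - Vb) * y (t + m + 1)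
     + V * (\<Sum>i=1..m. y (t + i)) + Vb * y t - Cu * y (t - k)
     - (\<Sum>s\<in>S. (Cu + real (k - s) * V - Vb) * (y (t - s) - y (t - s - 1)))"

locale ramp_params =
  fixes L k m :: nat and Cu V Vb :: real and S :: "nat set"
  assumes V: "0 < V" and Vb: "Cu < Vb" "Vb < Cu + V"
    and k: "1 \<le> k" and m: "m \<le> k - 1"
    and S: "S \<subseteq> {s. s \<le> k - 1 \<and> int s \<le> int L - int m - 2}"
begin

abbreviation coeff :: "nat \<Rightarrow> real" where
  "coeff s \<equiv> Cu + real (k - s) * V - Vb"

lemma finite_S: "finite S"
  using S by (rule finite_subset) auto

lemma S_bounds: "s \<in> S \<Longrightarrow> s \<le> k - 1 \<and> s + m + 2 \<le> L"
  using S by auto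

lemma coeff_pos: "s \<le> k - 1 \<Longrightarrow> 0 < coeff s"
proof -
  assume "s \<le> k - 1"
  then have "1 \<le> real (k - s)"
    using k by auto
  then have "V \<le> real (k - s) * V"
    using V by simp
  then show ?thesis
    using Vb by linarith
qed

end

locale ramp_window = ramp_params L k m Cu V Vb S + commitment T L l Cb Cu V Vb x y
  for L k m Cu V Vb S T l Cb x y +
  fixes t :: nat
  assumes t: "k + 1 \<le> t" "t + m + 1 \<le> T"
begin

abbreviation startup :: "nat \<Rightarrow> bool" where
  "startup i \<equiv> y (i - 1) = 0 \<and> y i = 1"

lemma window_indices: "t - k \<in> {1..T}" "t \<in> {1..T}"
  using t k by auto

lemma switch_indices: "s \<in> S \<Longrightarrow> t - s - 1 \<in> {1..T}" "s \<in> S \<Longrightarrow> t - s \<in> {1..T}"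
  using S_bounds[of s] t k by auto

lemma lower_end: "Cu * y (t - k) \<le> x (t - k)"
  using output_bounds window_indices by blast

lemma startup_in_S_stays_on:
  assumes "s \<in> S" "startup (t - s)" "t - s \<le> r" "r \<le> t + m + 1"
  shows "y r = 1"
proof -
  have "1 \<le> t - s - 1" "t - s - 1 < t - s" "r \<le> t - s - 1 + L" "r \<le> T"
    using assms(1,4) S_bounds[of s] t k by auto
  then show ?thesis
    using stays_on[of "t - s - 1" "t - s" r] assms(2,3) by simp
qed

lemma startups_in_S_unique:
  assumes "s \<in> S" "\<sigma> \<in> S" "startup (t - s)" "startup (t - \<sigma>)"
  shows "s = \<sigma>"
proof (rule ccontr)
  assume "s \<noteq> \<sigma>"
  then consider "s < \<sigma>" | "\<sigma> < s"
    by linarith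
  then show False
  proof cases
    case 1
    then have "t - \<sigma> \<le> t - s - 1"
      using S_bounds[of \<sigma>] assms t by auto
    then have "y (t - s - 1) = 1"
      using startup_in_S_stays_on[OF assms(2,4)] by simp
    then show False
      using assms(3) by simp
  next
    case 2
    then have "t - s \<le> t - \<sigma> - 1"
      using S_bounds[of s] assms t by auto
    then have "y (t - \<sigma> - 1) = 1"
      using startup_in_S_stays_on[OF assms(1,3)] by simp
    then show False
      using assms(4) by simp
  qed
qed

lemma switch_term_bounds:
  assumes "s \<in> S"
  shows "coeff s * (y (t - s) - y (t - s - 1)) \<le> coeff s"
    and "\<not> startup (t - s) \<Longrightarrow> coeff s * (y (t - s) - y (t - s - 1)) \<le> 0"
proof -
  have "y (t - s) = 0 \<or> y (t - s) = 1" "y (t - s - 1) = 0 \<or> y (t - s - 1) = 1"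
    using binary[OF switch_indices(1)[OF assms]] binary[OF switch_indices(2)[OF assms]] by simp_all
  moreover have "0 < coeff s"
    using S_bounds[OF assms] by (intro coeff_pos) simp
  ultimately show "coeff s * (y (t - s) - y (t - s - 1)) \<le> coeff s"
    and "\<not> startup (t - s) \<Longrightarrow> coeff s * (y (t - s) - y (t - s - 1)) \<le> 0"
    by (auto simp del: of_nat_diff)
qed

lemma switch_sum_nonpos:
  assumes "\<forall>s\<in>S. \<not> startup (t - s)"
  shows "(\<Sum>s\<in>S. coeff s * (y (t - s) - y (t - s - 1))) \<le> 0"
proof (rule sum_nonpos)
  fix s assume s: "s \<in> S"
  then have "\<not> startup (t - s)"
    using assms by blast
  then show "coeff s * (y (t - s) - y (t - s - 1)) \<le> 0"
    by (rule switch_term_bounds(2)[OF s])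
qed

lemma switch_sum_le_startup:
  assumes "\<sigma> \<in> S" "startup (t - \<sigma>)"
  shows "(\<Sum>s\<in>S. coeff s * (y (t - s) - y (t - s - 1))) \<le> coeff \<sigma>"
proof -
  have "(\<Sum>s\<in>S. coeff s * (y (t - s) - y (t - s - 1)))
      \<le> (\<Sum>s\<in>S. if s = \<sigma> then coeff s else 0)"
  proof (rule sum_mono)
    fix s assume s: "s \<in> S"
    show "coeff s * (y (t - s) - y (t - s - 1)) \<le> (if s = \<sigma> then coeff s else 0)"
    proof (cases "s = \<sigma>")
      case True
      then show ?thesis
        using switch_term_bounds(1)[OF s] by simp
    next
      case False
      then have "\<not> startup (t - s)"
        using startups_in_S_unique[OF s assms(1) _ assms(2)] by blast
      then show ?thesis
        using switch_term_bounds(2)[OF s] False by simp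
    qed
  qed
  also have "\<dots> = coeff \<sigma>"
    using finite_S assms(1) by (simp add: sum.delta)
  finally show ?thesis .
qed

lemma ramp_rhs_eq:
  "ramp_rhs Cu V Vb k m S t y = coeff m * y (t + m + 1) + V * (\<Sum>i=1..m. y (t + i)) + Vb * y t
     - Cu * y (t - k) - (\<Sum>s\<in>S. coeff s * (y (t - s) - y (t - s - 1)))"
  unfolding ramp_rhs_def ..

lemma ramp_terms_nonneg: "0 \<le> coeff m * y (t + m + 1)" "0 \<le> V * (\<Sum>i=1..m. y (t + i))"
proof -
  have nonneg: "0 \<le> y i" if "i \<in> {1..T}" for i
    using binary[OF that] by auto
  have "0 \<le> (\<Sum>i=1..m. y (t + i))"
    by (rule sum_nonneg) (use nonneg t in auto)
  then show "0 \<le> V * (\<Sum>i=1..m. y (t + i))"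
    using V by simp
  show "0 \<le> coeff m * y (t + m + 1)"
    using coeff_pos[OF m] nonneg[of "t + m + 1"] t by simp
qed

lemma ramp_inequality_if_off:
  assumes "y t = 0"
  shows "x t - x (t - k) \<le> ramp_rhs Cu V Vb k m S t y"
proof -
  have "\<not> startup (t - s)" if "s \<in> S" for s
    using startup_in_S_stays_on[OF that, of t] assms t by auto
  then have "(\<Sum>s\<in>S. coeff s * (y (t - s) - y (t - s - 1))) \<le> 0"
    by (intro switch_sum_nonpos) blast
  moreover have "x t = 0"
    using output_off window_indices assms by blast
  moreover have "Vb * y t = 0"
    using assms by simp
  ultimately show ?thesis
    unfolding ramp_rhs_eq using ramp_terms_nonneg lower_end assms by linarith
qed

lemma ramp_inequality_if_startup_in_S:
  assumes "\<sigma> \<in> S" "startup (t - \<sigma>)"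
  shows "x t - x (t - k) \<le> ramp_rhs Cu V Vb k m S t y"
proof -
  have on: "y r = 1" if "t - \<sigma> \<le> r" "r \<le> t + m + 1" for r
    using startup_in_S_stays_on[OF assms] that by blast
  have "(\<Sum>i=1..m. y (t + i)) = real m"
    using on by simp
  moreover have "x t \<le> Vb + real \<sigma> * V"
    using output_after_startup[of "t - \<sigma>" t] assms on S_bounds[of \<sigma>] t k by auto
  moreover have "real (k - m) = real k - real m" "real (k - \<sigma>) = real k - real \<sigma>"
    using m k S_bounds[of \<sigma>] assms(1) by auto
  ultimately show ?thesis
    unfolding ramp_rhs_eq using switch_sum_le_startup[OF assms] on[of t] on[of "t + m + 1"] lower_end
    by (simp add: algebra_simps)
qed

lemma ramp_inequality_if_on_through_window:
  assumes "\<forall>s\<in>S. \<not> startup (t - s)" "\<forall>r\<in>{t..t + m + 1}. y r = 1"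
  shows "x t - x (t - k) \<le> ramp_rhs Cu V Vb k m S t y"
proof -
  have "(\<Sum>i=1..m. y (t + i)) = real m"
    using assms(2) by simp
  moreover have "real (k - m) = real k - real m"
    using m k by auto
  ultimately have rhs: "Cu + real k * V - Cu * y (t - k) \<le> ramp_rhs Cu V Vb k m S t y"
    unfolding ramp_rhs_eq using switch_sum_nonpos[OF assms(1)] assms(2)
    by (simp add: algebra_simps)
  have "y t = 1"
    using assms(2) by simp
  show ?thesis
  proof (cases "\<forall>r\<in>{t - k..t}. y r = 1")
    case True
    moreover have "1 \<le> t - k" "t - k \<le> t" "t \<le> T" "t - (t - k) = k"
      using t k by auto
    ultimately have "x t - x (t - k) \<le> real k * V" "y (t - k) = 1"
      using output_change_while_on[of "t - k" t] by auto
    then show ?thesis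
      using rhs by simp
  next
    case False
    then obtain q where q: "t - k \<le> q" "q \<le> t" "y q \<noteq> 1"
      by auto
    with \<open>y t = 1\<close> have "q < t"
      by (cases "q = t") auto
    then have "x t \<le> Vb + real (t - q - 1) * V"
      using output_after_off q t k \<open>y t = 1\<close> V by simp
    also have "\<dots> \<le> Vb + (real k - 1) * V"
    proof -
      have "real (t - q - 1) \<le> real k - 1"
        using q \<open>q < t\<close> k t by linarith
      then show ?thesis
        using V by (simp add: mult_right_mono)
    qed
    finally show ?thesis
      using rhs lower_end Vb by (simp add: algebra_simps)
  qed
qed

lemma ramp_inequality_if_shutdown_in_window:
  assumes "\<forall>s\<in>S. \<not> startup (t - s)" "y t = 1" "r \<in> {t..t + m + 1}" "y r \<noteq> 1"
  shows "x t - x (t - k) \<le> ramp_rhs Cu V Vb k m S t y"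
proof -
  obtain j where j: "t \<le> j" "j < r" "\<forall>i\<in>{t..j}. y i = 1" "y (j + 1) \<noteq> 1"
    using first_switch_off[of "\<lambda>i. y i = 1" t r] assms by force
  have "j + 1 \<in> {1..T}"
    using j assms(3) t by auto
  then have "y (j + 1) = 0"
    using binary j(4) by blast
  moreover have "1 \<le> t"
    using t by simp
  ultimately have "x t \<le> Vb + real (j - t) * V"
    using output_before_shutdown[of t j] j \<open>j + 1 \<in> {1..T}\<close> by auto
  moreover have "real (j - t) * V \<le> V * (\<Sum>i=1..m. y (t + i))"
  proof -
    have "0 \<le> y (t + i)" if "i \<in> {1..m}" for i
      using binary[of "t + i"] that t by auto
    then have "(\<Sum>i=1..j - t. y (t + i)) \<le> (\<Sum>i=1..m. y (t + i))"
      using j assms(3) by (intro sum_mono2) auto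
    moreover have "(\<Sum>i=1..j - t. y (t + i)) = (\<Sum>i=1..j - t. 1)"
      using j(3) by (intro sum.cong) auto
    ultimately show ?thesis
      using V by simp
  qed
  ultimately show ?thesis
    unfolding ramp_rhs_eq using switch_sum_nonpos[OF assms(1)] ramp_terms_nonneg(1) lower_end
      assms(2) by simp
qed

theorem ramp_inequality: "x t - x (t - k) \<le> ramp_rhs Cu V Vb k m S t y"
proof (cases "y t = 1")
  case True
  show ?thesis
  proof (cases "\<exists>\<sigma>\<in>S. startup (t - \<sigma>)")
    case True
    then show ?thesis
      using ramp_inequality_if_startup_in_S by blast
  next
    case no_startup: False
    show ?thesis
    proof (cases "\<forall>r\<in>{t..t + m + 1}. y r = 1")
      case True
      then show ?thesis
        using ramp_inequality_if_on_through_window no_startup by blast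
    next
      case False
      then show ?thesis
        using ramp_inequality_if_shutdown_in_window no_startup \<open>y t = 1\<close> by blast
    qed
  qed
next
  case False
  then show ?thesis
    using ramp_inequality_if_off binary window_indices by blast
qed

end

lemma aff_dim_kernel:
  fixes g :: "'a::euclidean_space \<Rightarrow> real"
  assumes "linear g" "g p \<noteq> 0"
  shows "aff_dim {v. g v = 0} = int DIM('a) - 1"
proof -
  define w where "w = adjoint g 1"
  have g: "g v = w \<bullet> v" for v
    using adjoint_works[OF assms(1), of v 1] by (simp add: w_def inner_commute)
  then have "w \<noteq> 0"
    using assms(2) by auto
  then show ?thesis
    using aff_dim_hyperplane[of w 0] by (simp add: g)
qed

lemma span_UNIV_if_kernel_in_span:
  fixes g :: "'a::euclidean_space \<Rightarrow> real"
  assumes "linear g" "{v. g v = 0} \<subseteq> span K" "p \<in> K" "g p \<noteq> 0"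
  shows "span K = UNIV"
proof -
  have "v \<in> span K" for v
  proof -
    let ?c = "g v / g p"
    have "g (v - ?c *\<^sub>R p) = 0"
      using assms(4) by (simp add: linear_diff[OF assms(1)] linear_scale[OF assms(1)])
    then have "v - ?c *\<^sub>R p \<in> span K"
      using assms(2) by blast
    moreover have "?c *\<^sub>R p \<in> span K"
      using assms(3) by (simp add: span_base span_scale)
    ultimately show "v \<in> span K"
      using span_add by fastforce
  qed
  then show ?thesis
    by auto
qed

lemma linear_inequality_convex_hull:
  fixes a b :: "'a::real_vector \<Rightarrow> real"
  assumes "linear (\<lambda>p. a p - b p)" "\<forall>p\<in>K. a p \<le> b p"
  shows "\<forall>p\<in>convex hull K. a p \<le> b p"
proof -
  have "convex ((\<lambda>p. a p - b p) -` {..0})"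
    using convex_linear_vimage[OF assms(1), of "{..0}"] by (simp add: convex_real_interval)
  then have "convex hull K \<subseteq> (\<lambda>p. a p - b p) -` {..0}"
    using assms(2) by (intro hull_minimal) auto
  then show ?thesis
    by auto
qed

lemma aff_dim_convex_hull_spanning:
  fixes K :: "'a::euclidean_space set"
  assumes "0 \<in> K" "span K = UNIV"
  shows "aff_dim (convex hull K) = int DIM('a)"
  using aff_dim_eq_dim_subtract[of 0 K] assms dim_eq_full[of K]
  by (simp add: hull_inc aff_dim_convex_hull)

lemma valid_facet_convex_hullI:
  fixes a b :: "'a::euclidean_space \<Rightarrow> real"
  assumes lin: "linear (\<lambda>p. a p - b p)" and zero: "0 \<in> K" and valid: "\<forall>p\<in>K. a p \<le> b p"
    and p: "p \<in> K" "a p \<noteq> b p"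
    and kernel: "{v. a v = b v} \<subseteq> span {p\<in>K. a p = b p}"
  shows "valid_facet (convex hull K) a b"
proof -
  let ?F = "{p \<in> convex hull K. a p = b p}"
  have ker: "{v. a v - b v = 0} = {v. a v = b v}"
    by auto
  have sub: "subspace {v. a v = b v}"
    using real_vector.linear_subspace_kernel[OF lin] unfolding ker .
  have "span K = UNIV"
    using span_UNIV_if_kernel_in_span[OF lin _ p(1)] kernel span_mono[of "{p\<in>K. a p = b p}" K] p(2)
    unfolding ker by force
  then have hull: "aff_dim (convex hull K) = int DIM('a)"
    using zero by (rule aff_dim_convex_hull_spanning[rotated])
  have "span ?F = {v. a v = b v}"
  proof
    have "{v. a v = b v} \<subseteq> span {p\<in>K. a p = b p}"
      by (rule kernel)
    also have "\<dots> \<subseteq> span ?F"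
      by (intro span_mono) (auto simp: hull_inc)
    finally show "{v. a v = b v} \<subseteq> span ?F" .
    show "span ?F \<subseteq> {v. a v = b v}"
      using sub by (intro span_minimal) auto
  qed
  moreover have "0 \<in> ?F"
    using zero linear_0[OF lin] by (simp add: hull_inc)
  then have "aff_dim ?F = int (dim (span ?F))"
    using aff_dim_eq_dim_subtract[of 0 ?F] by (simp add: hull_inc)
  ultimately have "aff_dim ?F = aff_dim {v. a v = b v}"
    using aff_dim_subspace[OF sub] by simp
  also have "\<dots> = aff_dim (convex hull K) - 1"
    using aff_dim_kernel[OF lin] p(2) hull unfolding ker by simp
  finally show ?thesis
    unfolding valid_facet_def using linear_inequality_convex_hull[OF lin valid] by simp
qed

lemma valid_facet_linear_automorphism:
  fixes f :: "'a::euclidean_space \<Rightarrow> 'a"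
  assumes f: "linear f" "inj f" "f ` K = K" and facet: "valid_facet K a b"
  shows "valid_facet K (\<lambda>p. a (f p)) (\<lambda>p. b (f p))"
proof -
  have "f ` {p\<in>K. a (f p) = b (f p)} = {q\<in>K. a q = b q}"
  proof
    show "f ` {p\<in>K. a (f p) = b (f p)} \<subseteq> {q\<in>K. a q = b q}"
      using f(3) by auto
    show "{q\<in>K. a q = b q} \<subseteq> f ` {p\<in>K. a (f p) = b (f p)}"
    proof
      fix q assume "q \<in> {q\<in>K. a q = b q}"
      moreover obtain p where "p \<in> K" "q = f p"
        using f(3) calculation by (metis (no_types, lifting) imageE mem_Collect_eq)
      ultimately show "q \<in> f ` {p\<in>K. a (f p) = b (f p)}"
        by auto
    qed
  qed
  then have "aff_dim {p\<in>K. a (f p) = b (f p)} = aff_dim {q\<in>K. a q = b q}"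
    using aff_dim_injective_linear_image[OF f(1,2)] by metis
  moreover have "\<forall>p\<in>K. a (f p) \<le> b (f p)"
    using facet f(3) unfolding valid_facet_def by blast
  ultimately show ?thesis
    using facet unfolding valid_facet_def by simp
qed

lemma sum_scaleR_axis_component:
  "(\<Sum>i\<in>A. c i *\<^sub>R axis i (1::real)) $ j = (if j \<in> A then c j else 0)"
  for A :: "'n::finite set"
  by (simp add: sum_component axis_def if_distrib sum.delta' cong: if_cong)

lemma span_snd_surj:
  fixes Z :: "('a::real_vector \<times> (real^'n)) set"
  assumes "\<And>i. \<exists>r\<in>span Z. snd r = axis i 1"
  shows "\<exists>w\<in>span Z. snd w = y"
proof -
  obtain r where r: "\<And>i. r i \<in> span Z" "\<And>i. snd (r i) = axis i 1"
    using assms by metis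
  have "snd (\<Sum>i\<in>UNIV. (y $ i) *\<^sub>R r i) = (\<Sum>i\<in>UNIV. (y $ i) *\<^sub>R axis i 1)"
    unfolding snd_sum using r(2) by simp
  also have "\<dots> = y"
    using basis_expansion[of y] by (simp add: scalar_mult_eq_scaleR)
  finally have "snd (\<Sum>i\<in>UNIV. (y $ i) *\<^sub>R r i) = y" .
  moreover have "(\<Sum>i\<in>UNIV. (y $ i) *\<^sub>R r i) \<in> span Z"
    by (intro span_sum span_scale r(1))
  ultimately show ?thesis
    by blast
qed

lemma span_fst_if_equal_components:
  fixes Z :: "((real^'n) \<times> 'b::real_vector) set" and a b :: 'n
  assumes "f $ a = f $ b"
    and "\<And>i. i \<noteq> a \<Longrightarrow> i \<noteq> b \<Longrightarrow> (axis i 1, 0) \<in> span Z" "((\<chi> i. 1), 0) \<in> span Z"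
  shows "(f, 0) \<in> span Z"
proof -
  have "f = (\<Sum>i\<in>UNIV-{a,b}. (f $ i - f $ a) *\<^sub>R axis i 1) + (f $ a) *\<^sub>R (\<chi> i. 1)"
  proof (subst vec_eq_iff, intro allI)
    fix j
    show "f $ j = ((\<Sum>i\<in>UNIV-{a,b}. (f $ i - f $ a) *\<^sub>R axis i 1) + (f $ a) *\<^sub>R (\<chi> i. 1)) $ j"
      using assms(1) sum_scaleR_axis_component[of "\<lambda>i. f $ i - f $ a" "UNIV-{a,b}" j] by auto
  qed
  then have "(f, 0) = (\<Sum>i\<in>UNIV-{a,b}. (f $ i - f $ a) *\<^sub>R (axis i 1, 0)) + (f $ a) *\<^sub>R ((\<chi> i. 1), 0)"
    by (simp add: prod_eq_iff fst_sum snd_sum)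
  also have "\<dots> \<in> span Z"
    using assms(2,3) by (intro span_add span_sum span_scale) auto
  finally show ?thesis .
qed

lemma kernel_in_span_of_generators:
  fixes g :: "(real^'n) \<times> (real^'n) \<Rightarrow> real" and a b :: 'n
  assumes lin: "linear g" and Z: "\<forall>p\<in>Z. g p = 0"
    and g_x: "\<And>x. g (x, 0) = x $ a - x $ b"
    and x_axes: "\<And>i. i \<noteq> a \<Longrightarrow> i \<noteq> b \<Longrightarrow> (axis i 1, 0) \<in> span Z"
    and x_ones: "((\<chi> i. 1), 0) \<in> span Z"
    and y_axes: "\<And>i. \<exists>r\<in>span Z. snd r = axis i 1"
  shows "{v. g v = 0} \<subseteq> span Z"
proof
  fix v assume "v \<in> {v. g v = 0}"
  obtain w where w: "w \<in> span Z" "snd w = snd v"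
    using span_snd_surj[OF y_axes] by blast
  then have vw: "v - w = (fst (v - w), 0)"
    by (simp add: prod_eq_iff)
  have "g w = 0"
    using linear_eq_0_on_span[OF lin _ w(1)] Z by auto
  then have "g (v - w) = 0"
    using \<open>v \<in> {v. g v = 0}\<close> linear_diff[OF lin] by simp
  then have "fst (v - w) $ a = fst (v - w) $ b"
    using g_x[of "fst (v - w)"] vw by simp
  then have "(fst (v - w), 0) \<in> span Z"
    using span_fst_if_equal_components[OF _ x_axes x_ones] by blast
  then have "v - w \<in> span Z"
    using vw by simp
  from span_add[OF this w(1)] show "v \<in> span Z"
    by simp
qed

lemma span_scaleR_cancel: "c \<noteq> 0 \<Longrightarrow> c *\<^sub>R v \<in> span A \<Longrightarrow> v \<in> span A"
  using span_scale[of "c *\<^sub>R v" A "1 / c"] by simp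

lemma max_diff_le: "\<bar>max c u - max c v\<bar> \<le> \<bar>u - v\<bar>" for c u v :: real
  by (simp add: max_def abs_if)

locale indexing =
  fixes ix :: "nat \<Rightarrow> 'n::finite"
  assumes ix: "bij_betw ix {1..CARD('n)} UNIV"
begin

definition index :: "'n \<Rightarrow> nat" where
  "index i = inv_into {1..CARD('n)} ix i"

lemma index_range: "index i \<in> {1..CARD('n)}"
  using ix unfolding index_def by (metis bij_betw_def inv_into_into iso_tuple_UNIV_I)

lemma ix_index [simp]: "ix (index i) = i"
  using ix unfolding index_def by (meson bij_betw_inv_into_right iso_tuple_UNIV_I)

lemma index_ix [simp]: "j \<in> {1..CARD('n)} \<Longrightarrow> index (ix j) = j"
  using ix unfolding index_def by (simp add: bij_betw_def inv_into_f_f)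

lemma ix_inj: "i \<in> {1..CARD('n)} \<Longrightarrow> j \<in> {1..CARD('n)} \<Longrightarrow> ix i = ix j \<longleftrightarrow> i = j"
  by (metis index_ix)

definition vec_of :: "(nat \<Rightarrow> real) \<Rightarrow> real^'n" where
  "vec_of X = (\<chi> i. X (index i))"

definition reverse_time :: "(real^'n) \<times> (real^'n) \<Rightarrow> (real^'n) \<times> (real^'n)" where
  "reverse_time p =
    (vec_of (\<lambda>t. xc ix p (CARD('n) + 1 - t)), vec_of (\<lambda>t. yc ix p (CARD('n) + 1 - t)))"

lemma xc_vec_of: "j \<in> {1..CARD('n)} \<Longrightarrow> xc ix (vec_of X, v) j = X j"
  and yc_vec_of: "j \<in> {1..CARD('n)} \<Longrightarrow> yc ix (u, vec_of Y) j = Y j"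
  unfolding xc_def yc_def vec_of_def by simp_all

lemma vec_of_xc_yc: "(vec_of (xc ix p), vec_of (yc ix p)) = p"
  unfolding xc_def yc_def vec_of_def by (simp add: prod_eq_iff vec_eq_iff)

lemma vec_of_cong: "\<forall>j\<in>{1..CARD('n)}. X' j = X j \<Longrightarrow> vec_of X' = vec_of X"
  unfolding vec_of_def using index_range by (simp add: vec_eq_iff)

lemma vec_of_in_UCP_iff:
  "(vec_of X, vec_of Y) \<in> UCP ix L l Cb Cu V Vb \<longleftrightarrow> unit_commitment CARD('n) L l Cb Cu V Vb X Y"
  unfolding mem_UCP_iff by (rule unit_commitment_cong) (simp_all add: xc_vec_of yc_vec_of)

lemma xc_reverse_time: "t \<in> {1..CARD('n)} \<Longrightarrow> xc ix (reverse_time p) t = xc ix p (CARD('n) + 1 - t)"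
  and yc_reverse_time: "t \<in> {1..CARD('n)} \<Longrightarrow> yc ix (reverse_time p) t = yc ix p (CARD('n) + 1 - t)"
  unfolding reverse_time_def by (simp_all add: xc_vec_of yc_vec_of)

lemma linear_reverse_time: "linear reverse_time"
  unfolding linear_iff reverse_time_def vec_of_def xc_def yc_def by (simp add: vec_eq_iff)

lemma reverse_time_reverse_time [simp]: "reverse_time (reverse_time p) = p"
proof -
  have "T + 1 - j \<in> {1..T}" "T + 1 - (T + 1 - j) = j" if "j \<in> {1..T}" for j and T :: nat
    using that by auto
  then have "reverse_time (reverse_time p) = (vec_of (xc ix p), vec_of (yc ix p))"
    unfolding reverse_time_def[of "reverse_time p"]
    by (simp add: vec_of_cong xc_reverse_time yc_reverse_time)
  then show ?thesis
    by (simp add: vec_of_xc_yc)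
qed

lemma inj_reverse_time: "inj reverse_time"
  by (metis injI reverse_time_reverse_time)

lemma reverse_time_UCP: "reverse_time ` UCP ix L l Cb Cu V Vb = UCP ix L l Cb Cu V Vb"
proof -
  have "reverse_time p \<in> UCP ix L l Cb Cu V Vb" if "p \<in> UCP ix L l Cb Cu V Vb" for p
    using that unfolding mem_UCP_iff[of p] reverse_time_def vec_of_in_UCP_iff
    by (rule unit_commitment_reverse)
  then show ?thesis
    by (metis image_subset_iff reverse_time_reverse_time subset_antisym subsetI image_eqI)
qed

lemma vec_of_diff: "vec_of X - vec_of Y = vec_of (\<lambda>j. X j - Y j)"
  by (simp add: vec_of_def vec_eq_iff)

lemma vec_of_const: "vec_of (\<lambda>_. c) = (\<chi> i. c)"
  by (simp add: vec_of_def)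

lemma vec_of_single:
  assumes "j \<in> {1..CARD('n)}" "\<forall>i\<in>{1..CARD('n)}. i \<noteq> j \<longrightarrow> X i = 0"
  shows "vec_of X = X j *\<^sub>R axis (ix j) 1"
proof (subst vec_eq_iff, intro allI)
  fix i
  show "vec_of X $ i = (X j *\<^sub>R axis (ix j) 1) $ i"
  proof (cases "i = ix j")
    case False
    then have "index i \<noteq> j"
      by (metis ix_index)
    then show ?thesis
      using assms(2) index_range[of i] False by (simp add: vec_of_def axis_def)
  qed (use assms(1) in \<open>simp add: vec_of_def\<close>)
qed

lemma vec_of_on_until_step:
  assumes "j \<in> {1..CARD('n)}"
  shows "vec_of (on_until j) - vec_of (on_until (j - 1)) = axis (ix j) 1"
proof -
  have "\<forall>i\<in>{1..CARD('n)}. i \<noteq> j \<longrightarrow> on_until j i - on_until (j - 1) i = 0"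
    "on_until j j - on_until (j - 1) j = 1"
    using assms by (auto simp: on_until_def)
  then have "vec_of (\<lambda>i. on_until j i - on_until (j - 1) i) = axis (ix j) 1"
    using vec_of_single[OF assms, of "\<lambda>i. on_until j i - on_until (j - 1) i"] by simp
  then show ?thesis
    by (simp add: vec_of_diff)
qed

lemma vec_of_complement_on_from: "vec_of (\<lambda>_. 1) - vec_of (on_from a) = vec_of (on_until (a - 1))"
  unfolding vec_of_diff by (rule vec_of_cong) (auto simp: on_from_def on_until_def)

end

locale ramp_facets = indexing ix + ramp_params L k m Cu V Vb S
  for ix :: "nat \<Rightarrow> 'n::finite" and L k m :: nat and Cu V Vb :: real and S :: "nat set" +
  fixes l :: nat and Cb :: real
  assumes Cu: "0 < Cu" and capacity: "real k * V < Cb - Cu"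
begin

lemma below_capacity: "i \<le> k - 1 \<Longrightarrow> Vb + real i * V < Cb"
proof -
  assume "i \<le> k - 1"
  then have "real i * V \<le> (real k - 1) * V"
    using k V by (intro mult_right_mono) auto
  then show ?thesis
    using capacity Vb by (simp add: algebra_simps)
qed

lemma Vb_below_Cb: "Vb < Cb"
  using below_capacity[of 0] by simp

end

locale ramp_facet = ramp_facets ix L k m Cu V Vb S l Cb
  for ix :: "nat \<Rightarrow> 'n::finite" and L k m :: nat and Cu V Vb :: real and S :: "nat set"
    and l :: nat and Cb :: real +
  fixes t :: nat
  assumes t: "k + 1 \<le> t" "t + m + 1 \<le> CARD('n)"
begin

definition face :: "((real^'n) \<times> (real^'n)) set" where
  "face = {p \<in> UCP ix L l Cb Cu V Vb. xc ix p t - xc ix p (t - k) = ramp_rhs Cu V Vb k m S t (yc ix p)}"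

lemma window: "t - k \<in> {1..CARD('n)}" "t \<in> {1..CARD('n)}" "t - k < t"
  using t k by auto

lemma ramp_rhs_cong:
  assumes "\<forall>j\<in>{1..CARD('n)}. Y' j = Y j"
  shows "ramp_rhs Cu V Vb k m S t Y' = ramp_rhs Cu V Vb k m S t Y"
proof -
  have Y: "Y' j = Y j" if "1 \<le> j" "j \<le> CARD('n)" for j
    using assms that by auto
  have "(\<Sum>i=1..m. Y' (t + i)) = (\<Sum>i=1..m. Y (t + i))"
    by (rule sum.cong) (use Y t in auto)
  moreover have "(\<Sum>s\<in>S. coeff s * (Y' (t - s) - Y' (t - s - 1)))
      = (\<Sum>s\<in>S. coeff s * (Y (t - s) - Y (t - s - 1)))"
  proof (rule sum.cong)
    fix s assume "s \<in> S"
    then have "1 \<le> t - s - 1" "t - s \<le> CARD('n)"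
      using S_bounds[of s] t k by auto
    then show "coeff s * (Y' (t - s) - Y' (t - s - 1)) = coeff s * (Y (t - s) - Y (t - s - 1))"
      using Y by simp
  qed simp
  ultimately show ?thesis
    unfolding ramp_rhs_def using Y[of "t + m + 1"] Y[of t] Y[of "t - k"] t window by simp
qed

lemma vec_of_in_face:
  assumes "unit_commitment CARD('n) L l Cb Cu V Vb X Y" "X t - X (t - k) = ramp_rhs Cu V Vb k m S t Y"
  shows "(vec_of X, vec_of Y) \<in> face"
proof -
  have "ramp_rhs Cu V Vb k m S t (yc ix (vec_of X, vec_of Y)) = ramp_rhs Cu V Vb k m S t Y"
    by (rule ramp_rhs_cong) (simp add: yc_vec_of)
  then show ?thesis
    using assms window by (simp add: face_def vec_of_in_UCP_iff xc_vec_of)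
qed

lemma ramp_rhs_always_on: "ramp_rhs Cu V Vb k m S t (\<lambda>_. 1) = real k * V"
  using m k unfolding ramp_rhs_def by (simp add: algebra_simps of_nat_diff)

lemma early_shutdown_in_face:
  assumes "b < t" "\<forall>s\<in>S. b \<noteq> t - s - 1"
  shows "(vec_of (\<lambda>j. Cu * on_until b j), vec_of (on_until b)) \<in> face"
proof (rule vec_of_in_face)
  show "unit_commitment CARD('n) L l Cb Cu V Vb (\<lambda>j. Cu * on_until b j) (on_until b)"
    by (rule unit_commitment_on_until) (use Cu Vb V Vb_below_Cb in \<open>auto simp: on_until_def\<close>)
  have "on_until b (t - s) - on_until b (t - s - 1) = 0" if "s \<in> S" for s
    using assms that S_bounds[OF that] t unfolding on_until_def by auto
  then show "Cu * on_until b t - Cu * on_until b (t - k) = ramp_rhs Cu V Vb k m S t (on_until b)"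
    using assms(1) unfolding ramp_rhs_def by (simp add: on_until_def)
qed

lemma late_startup_in_face:
  assumes "t + m + 2 \<le> a"
  shows "(vec_of (\<lambda>j. Cu * on_from a j), vec_of (on_from a)) \<in> face"
proof (rule vec_of_in_face)
  show "unit_commitment CARD('n) L l Cb Cu V Vb (\<lambda>j. Cu * on_from a j) (on_from a)"
    by (rule unit_commitment_on_from) (use Cu Vb V Vb_below_Cb in \<open>auto simp: on_from_def\<close>)
  have "on_from a (t - s) - on_from a (t - s - 1) = 0" for s
    using assms by (auto simp: on_from_def)
  then show "Cu * on_from a t - Cu * on_from a (t - k) = ramp_rhs Cu V Vb k m S t (on_from a)"
    using assms unfolding ramp_rhs_def by (simp add: on_from_def)
qed

lemma always_on_in_face:
  assumes "\<forall>i\<in>{1..CARD('n)}. Cu \<le> X i \<and> X i \<le> Cb" "\<forall>i\<in>{2..CARD('n)}. \<bar>X i - X (i - 1)\<bar> \<le> V"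
    and "X t - X (t - k) = real k * V"
  shows "(vec_of X, vec_of (\<lambda>_. 1)) \<in> face"
  using assms Cu V Vb unit_commitment_always_on[of "CARD('n)" Cu X Cb V Vb L l]
  by (intro vec_of_in_face) (simp_all add: ramp_rhs_always_on)

definition window_ramp :: "real \<Rightarrow> nat \<Rightarrow> real" where
  "window_ramp c j = c + V * real (min (max j (t - k)) t - (t - k))"

lemma window_ramp_bounds: "c \<le> window_ramp c j" "window_ramp c j \<le> c + real k * V"
  unfolding window_ramp_def using V by (auto simp: mult.commute intro!: mult_left_mono)

lemma window_ramp_step: "\<bar>window_ramp c i - window_ramp c (i - 1)\<bar> \<le> V"
proof -
  define d where "d = real (min (max i (t - k)) t - (t - k)) - real (min (max (i - 1) (t - k)) t - (t - k))"
  have "\<bar>d\<bar> \<le> 1"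
    unfolding d_def by (auto simp: min_def max_def)
  then have "V * \<bar>d\<bar> \<le> V"
    using V by (simp add: mult_left_le)
  moreover have "window_ramp c i - window_ramp c (i - 1) = V * d"
    unfolding window_ramp_def d_def by (simp add: algebra_simps)
  ultimately show ?thesis
    using V by (simp add: abs_mult)
qed

lemma window_ramp_after: "t \<le> j \<Longrightarrow> window_ramp c j = c + real k * V"
  unfolding window_ramp_def using window by auto

lemma window_ramp_in_face:
  assumes "Cu \<le> c" "c + real k * V \<le> Cb"
  shows "(vec_of (window_ramp c), vec_of (\<lambda>_. 1)) \<in> face"
proof (rule always_on_in_face)
  show "\<forall>i\<in>{1..CARD('n)}. Cu \<le> window_ramp c i \<and> window_ramp c i \<le> Cb"
    using window_ramp_bounds[of c] assms by (meson order_trans)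
  show "window_ramp c t - window_ramp c (t - k) = real k * V"
    unfolding window_ramp_def using window by simp
qed (use window_ramp_step in blast)

lemma window_ramp_dip_in_face:
  assumes "t < j" "j \<le> CARD('n)"
  shows "(vec_of ((window_ramp Cu)(j := Cu + real (k - 1) * V)), vec_of (\<lambda>_. 1)) \<in> face"
proof (rule always_on_in_face)
  let ?X = "(window_ramp Cu)(j := Cu + real (k - 1) * V)"
  have dip: "real (k - 1) * V \<le> real k * V" "real k * V = real (k - 1) * V + V"
    using k V by (auto simp: algebra_simps of_nat_diff)
  have "window_ramp Cu (j - 1) = Cu + real k * V" "window_ramp Cu (j + 1) = Cu + real k * V"
    using assms by (simp_all add: window_ramp_after)
  then show "\<forall>i\<in>{2..CARD('n)}. \<bar>?X i - ?X (i - 1)\<bar> \<le> V"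
    using dip window_ramp_step[of Cu] V by (auto simp: abs_le_iff)
  have "window_ramp Cu i \<le> Cb" for i
    using window_ramp_bounds(2)[of Cu i] capacity by simp
  then show "\<forall>i\<in>{1..CARD('n)}. Cu \<le> ?X i \<and> ?X i \<le> Cb"
    using window_ramp_bounds(1)[of Cu] dip capacity V by auto
  show "?X t - ?X (t - k) = real k * V"
    using assms window unfolding window_ramp_def by simp
qed

definition startup_profile :: "nat \<Rightarrow> nat \<Rightarrow> real" where
  "startup_profile a j = (if a \<le> j then Vb + real (min j t - a) * V else 0)"

lemma startup_profile_feasible:
  assumes "\<sigma> \<in> S"
  shows "unit_commitment CARD('n) L l Cb Cu V Vb (startup_profile (t - \<sigma>)) (on_from (t - \<sigma>))"
proof (rule unit_commitment_on_from)
  let ?X = "startup_profile (t - \<sigma>)"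
  have \<sigma>: "\<sigma> \<le> k - 1"
    using S_bounds[OF assms] by simp
  have "?X j \<le> Cb" if "t - \<sigma> \<le> j" for j
  proof -
    have "real (min j t - (t - \<sigma>)) * V \<le> real \<sigma> * V"
      using V by (intro mult_right_mono) auto
    then show ?thesis
      using that below_capacity[OF \<sigma>] unfolding startup_profile_def by simp
  qed
  moreover have "Cu \<le> ?X j" if "t - \<sigma> \<le> j" for j
    using that Cu Vb V unfolding startup_profile_def by (simp add: add_increasing2 less_imp_le)
  ultimately show "\<forall>i\<in>{1..CARD('n)}. t - \<sigma> \<le> i \<longrightarrow> Cu \<le> ?X i \<and> ?X i \<le> Cb"
    by blast
  show "\<forall>i\<in>{2..CARD('n)}. t - \<sigma> < i \<longrightarrow> \<bar>?X i - ?X (i - 1)\<bar> \<le> V"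
  proof (intro ballI impI)
    fix i assume "t - \<sigma> < i"
    define d where "d = real (min i t - (t - \<sigma>)) - real (min (i - 1) t - (t - \<sigma>))"
    have "0 \<le> d" "d \<le> 1"
      using \<open>t - \<sigma> < i\<close> unfolding d_def by auto
    then have "0 \<le> d * V" "d * V \<le> V"
      using V by (simp_all add: mult_left_le_one_le)
    moreover have "?X i - ?X (i - 1) = d * V"
      using \<open>t - \<sigma> < i\<close> unfolding startup_profile_def d_def by (simp add: algebra_simps)
    ultimately show "\<bar>?X i - ?X (i - 1)\<bar> \<le> V"
      by simp
  qed
qed (use Cu V Vb in \<open>simp_all add: startup_profile_def\<close>)

lemma switch_sum_on_from:
  assumes "\<sigma> \<in> S"
  shows "(\<Sum>s\<in>S. coeff s * (on_from (t - \<sigma>) (t - s) - on_from (t - \<sigma>) (t - s - 1))) = coeff \<sigma>"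
proof -
  have "on_from (t - \<sigma>) (t - s) - on_from (t - \<sigma>) (t - s - 1) = (if s = \<sigma> then 1 else 0)"
    if "s \<in> S" for s
  proof -
    have "s < t" "\<sigma> < t"
      using S_bounds[OF that] S_bounds[OF assms] k t by auto
    then show ?thesis
      unfolding on_from_def by auto
  qed
  then have "(\<Sum>s\<in>S. coeff s * (on_from (t - \<sigma>) (t - s) - on_from (t - \<sigma>) (t - s - 1)))
      = (\<Sum>s\<in>S. if s = \<sigma> then coeff s else 0)"
    by (intro sum.cong) simp_all
  also have "\<dots> = coeff \<sigma>"
    using finite_S assms by (simp add: sum.delta)
  finally show ?thesis .
qed

lemma startup_in_S_in_face:
  assumes "\<sigma> \<in> S"
  shows "(vec_of (startup_profile (t - \<sigma>)), vec_of (on_from (t - \<sigma>))) \<in> face"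
proof (rule vec_of_in_face[OF startup_profile_feasible[OF assms]])
  have \<sigma>: "\<sigma> \<le> k - 1" "t - k < t - \<sigma>"
    using S_bounds[OF assms] window k by auto
  have "startup_profile (t - \<sigma>) t = Vb + real \<sigma> * V" "startup_profile (t - \<sigma>) (t - k) = 0"
    using \<sigma> window unfolding startup_profile_def by auto
  moreover have "on_from (t - \<sigma>) t = 1" "on_from (t - \<sigma>) (t + m + 1) = 1"
    "on_from (t - \<sigma>) (t - k) = 0"
    using \<sigma> by (auto simp: on_from_def)
  moreover have "(\<Sum>i=1..m. on_from (t - \<sigma>) (t + i)) = (\<Sum>i=1..m. 1)"
    by (intro sum.cong) (auto simp: on_from_def)
  moreover have "real (k - m) = real k - real m" "real (k - \<sigma>) = real k - real \<sigma>"
    using m \<sigma> k by auto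
  ultimately show "startup_profile (t - \<sigma>) t - startup_profile (t - \<sigma>) (t - k)
      = ramp_rhs Cu V Vb k m S t (on_from (t - \<sigma>))"
    unfolding ramp_rhs_def switch_sum_on_from[OF assms] by (simp add: algebra_simps)
qed

definition flat_prefix :: "nat \<Rightarrow> real \<Rightarrow> nat \<Rightarrow> real" where
  "flat_prefix j w i = (if i \<le> t then if i = t - k then Cu else if i = j then w else Vb else 0)"

lemma flat_prefix_in_face:
  assumes "Cu \<le> w" "w \<le> Vb" "j \<noteq> t"
  shows "(vec_of (flat_prefix j w), vec_of (on_until t)) \<in> face"
proof (rule vec_of_in_face)
  let ?X = "flat_prefix j w"
  have range: "Cu \<le> ?X i \<and> ?X i \<le> Vb" if "i \<le> t" for i
    using that assms Vb unfolding flat_prefix_def by auto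
  have step: "\<bar>?X i - ?X (i - 1)\<bar> \<le> V" if "i \<le> t" for i
  proof -
    have "Cu \<le> ?X i \<and> ?X i \<le> Vb" "Cu \<le> ?X (i - 1) \<and> ?X (i - 1) \<le> Vb"
      using range that by simp_all
    then show ?thesis
      using Vb by (auto simp: abs_le_iff)
  qed
  have "?X t = Vb"
    using assms(3) window unfolding flat_prefix_def by auto
  show "unit_commitment CARD('n) L l Cb Cu V Vb ?X (on_until t)"
  proof (rule unit_commitment_on_until)
    show "\<forall>i\<in>{1..CARD('n)}. t < i \<longrightarrow> ?X i = 0"
      by (simp add: flat_prefix_def)
    show "\<forall>i\<in>{1..CARD('n)}. i \<le> t \<longrightarrow> Cu \<le> ?X i \<and> ?X i \<le> Cb"
      using range Vb_below_Cb by force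
    show "\<forall>i\<in>{2..CARD('n)}. i \<le> t \<longrightarrow> \<bar>?X i - ?X (i - 1)\<bar> \<le> V"
      using step by blast
    show "1 \<le> t \<longrightarrow> t < CARD('n) \<longrightarrow> ?X t \<le> Vb"
      using \<open>?X t = Vb\<close> by simp
  qed (use Cu V Vb in auto)
  show "?X t - ?X (t - k) = ramp_rhs Cu V Vb k m S t (on_until t)"
    using \<open>?X t = Vb\<close> window unfolding ramp_rhs_def by (simp add: on_until_def flat_prefix_def)
qed

definition shutdown_profile :: "nat \<Rightarrow> nat \<Rightarrow> real" where
  "shutdown_profile b j =
     (if j \<le> b then max Cu (Vb + real (b - t) * V - \<bar>real t - real j\<bar> * V) else 0)"

lemma shutdown_peak_bounds:
  assumes "t \<le> b" "b \<le> t + m"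
  shows "Cu \<le> Vb + real (b - t) * V" "Vb + real (b - t) * V < Cb"
    and "Vb + real (b - t) * V - real k * V \<le> Cu"
proof -
  have "b - t \<le> k - 1"
    using assms m by auto
  then have "real (b - t) \<le> real k - 1"
    using k by linarith
  then have "real (b - t) * V \<le> real k * V - V"
    using V by (metis left_diff_distrib mult_1 mult_right_mono less_imp_le)
  moreover have "0 \<le> real (b - t) * V"
    using V by simp
  ultimately show "Cu \<le> Vb + real (b - t) * V" "Vb + real (b - t) * V < Cb"
    and "Vb + real (b - t) * V - real k * V \<le> Cu"
    using below_capacity[OF \<open>b - t \<le> k - 1\<close>] Vb by linarith+
qed

lemma shutdown_profile_feasible:
  assumes "t \<le> b" "b \<le> t + m"
  shows "unit_commitment CARD('n) L l Cb Cu V Vb (shutdown_profile b) (on_until b)"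
proof (rule unit_commitment_on_until)
  let ?X = "shutdown_profile b" and ?peak = "Vb + real (b - t) * V"
  note peak = shutdown_peak_bounds[OF assms]
  show "\<forall>i\<in>{2..CARD('n)}. i \<le> b \<longrightarrow> \<bar>?X i - ?X (i - 1)\<bar> \<le> V"
  proof (intro ballI impI)
    fix i assume "i \<le> b"
    define u where "u = \<bar>real t - real i\<bar>"
    define w where "w = \<bar>real t - real (i - 1)\<bar>"
    have "\<bar>w - u\<bar> * V \<le> 1 * V"
      using V unfolding u_def w_def by (intro mult_right_mono) auto
    moreover have "(?peak - u * V) - (?peak - w * V) = (w - u) * V"
      by (simp add: algebra_simps)
    then have "\<bar>(?peak - u * V) - (?peak - w * V)\<bar> = \<bar>w - u\<bar> * V"
      using V by (simp add: abs_mult)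
    ultimately have "\<bar>(?peak - u * V) - (?peak - w * V)\<bar> \<le> V"
      by simp
    moreover have "?X i - ?X (i - 1) = max Cu (?peak - u * V) - max Cu (?peak - w * V)"
      using \<open>i \<le> b\<close> unfolding shutdown_profile_def u_def w_def by simp
    ultimately show "\<bar>?X i - ?X (i - 1)\<bar> \<le> V"
      using max_diff_le[of Cu "?peak - u * V" "?peak - w * V"] by linarith
  qed
  show "\<forall>i\<in>{1..CARD('n)}. i \<le> b \<longrightarrow> Cu \<le> ?X i \<and> ?X i \<le> Cb"
  proof (intro ballI impI)
    fix i assume "i \<le> b"
    have "0 \<le> \<bar>real t - real i\<bar> * V"
      using V by simp
    then have "?peak - \<bar>real t - real i\<bar> * V \<le> Cb"
      using peak(2) by linarith
    then show "Cu \<le> ?X i \<and> ?X i \<le> Cb"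
      using \<open>i \<le> b\<close> peak(1,2) unfolding shutdown_profile_def by simp
  qed
  show "1 \<le> b \<longrightarrow> b < CARD('n) \<longrightarrow> ?X b \<le> Vb"
    using assms Vb unfolding shutdown_profile_def by (simp add: of_nat_diff)
qed (use Cu V Vb in \<open>simp_all add: shutdown_profile_def\<close>)

lemma shutdown_in_window_in_face:
  assumes "t \<le> b" "b \<le> t + m"
  shows "(vec_of (shutdown_profile b), vec_of (on_until b)) \<in> face"
proof (rule vec_of_in_face[OF shutdown_profile_feasible[OF assms]])
  have "shutdown_profile b t = Vb + real (b - t) * V" "shutdown_profile b (t - k) = Cu"
    using shutdown_peak_bounds[OF assms] assms window
    unfolding shutdown_profile_def by (auto simp: max_def of_nat_diff)
  moreover have "on_until b (t - s) - on_until b (t - s - 1) = 0" for s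
    using assms by (auto simp: on_until_def)
  ultimately show "shutdown_profile b t - shutdown_profile b (t - k)
      = ramp_rhs Cu V Vb k m S t (on_until b)"
    using assms window sum_on_until_shift[OF assms]
    by (simp add: ramp_rhs_def on_until_def)
qed

lemma always_on_ramp_in_face: "(vec_of (window_ramp Cu), vec_of (\<lambda>_. 1)) \<in> face"
  using capacity by (intro window_ramp_in_face) auto

lemma span_face_complement:
  assumes "(X, vec_of (on_from a)) \<in> face"
  shows "\<exists>q\<in>span face. snd q = vec_of (on_until (a - 1))"
proof -
  have "(vec_of (window_ramp Cu), vec_of (\<lambda>_. 1)) - (X, vec_of (on_from a)) \<in> span face"
    using always_on_ramp_in_face assms by (intro span_diff span_base)
  then show ?thesis
    using vec_of_complement_on_from[of a] by (intro bexI) auto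
qed

lemma span_face_on_until: "\<exists>q\<in>span face. snd q = vec_of (on_until b)"
proof -
  consider (switch) \<sigma> where "\<sigma> \<in> S" "b = t - \<sigma> - 1"
    | (before) "b < t" "\<forall>s\<in>S. b \<noteq> t - s - 1"
    | (inside) "t \<le> b" "b \<le> t + m"
    | (after) "t + m < b"
    by (meson linorder_not_le)
  then show ?thesis
  proof cases
    case switch
    then show ?thesis
      using span_face_complement[OF startup_in_S_in_face] by simp
  next
    case before
    then have "(vec_of (\<lambda>j. Cu * on_until b j), vec_of (on_until b)) \<in> span face"
      by (intro span_base early_shutdown_in_face)
    then show ?thesis
      by (rule bexI[rotated]) simp
  next
    case inside
    then have "(vec_of (shutdown_profile b), vec_of (on_until b)) \<in> span face"
      by (intro span_base shutdown_in_window_in_face)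
    then show ?thesis
      by (rule bexI[rotated]) simp
  next
    case after
    then show ?thesis
      using span_face_complement[OF late_startup_in_face[of "b + 1"]] by simp
  qed
qed

lemma span_face_y_axis: "\<exists>q\<in>span face. snd q = axis i 1"
proof -
  have j: "index i \<in> {1..CARD('n)}"
    by (rule index_range)
  obtain q1 q0 where "q1 \<in> span face" "snd q1 = vec_of (on_until (index i))"
    and "q0 \<in> span face" "snd q0 = vec_of (on_until (index i - 1))"
    using span_face_on_until by meson
  then have "q1 - q0 \<in> span face" "snd (q1 - q0) = axis i 1"
    using vec_of_on_until_step[OF j] by (simp_all add: span_diff)
  then show ?thesis
    by blast
qed

lemma span_face_x_axis_of_pair:
  assumes "(vec_of X', Y) \<in> face" "(vec_of X, Y) \<in> face" "j \<in> {1..CARD('n)}"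
    and "\<forall>i\<in>{1..CARD('n)}. i \<noteq> j \<longrightarrow> X' i = X i" "X' j \<noteq> X j"
  shows "(axis (ix j) 1, 0) \<in> span face"
proof -
  from span_diff[OF span_base[OF assms(1)] span_base[OF assms(2)]]
  have "(X' j - X j) *\<^sub>R (axis (ix j) 1, 0) \<in> span face"
    using vec_of_single[OF assms(3), of "\<lambda>i. X' i - X i"] assms(4) by (simp add: vec_of_diff)
  from span_scaleR_cancel[OF _ this] assms(5) show ?thesis
    by simp
qed

lemma span_face_x_axis:
  assumes "i \<noteq> ix t" "i \<noteq> ix (t - k)"
  shows "(axis i 1, 0) \<in> span face"
proof -
  define j where "j = index i"
  have "j \<in> {1..CARD('n)}" "ix j = i"
    unfolding j_def by (rule index_range, simp)
  then have j: "j \<in> {1..CARD('n)}" "ix j = i" "j \<noteq> t" "j \<noteq> t - k"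
    using assms by auto
  show ?thesis
  proof (cases "j < t")
    case True
    have "(vec_of (flat_prefix j Cu), vec_of (on_until t)) \<in> face"
      "(vec_of (flat_prefix j Vb), vec_of (on_until t)) \<in> face"
      using flat_prefix_in_face j(3) Vb by simp_all
    moreover have "\<forall>i\<in>{1..CARD('n)}. i \<noteq> j \<longrightarrow> flat_prefix j Cu i = flat_prefix j Vb i"
      by (simp add: flat_prefix_def)
    moreover have "flat_prefix j Cu j \<noteq> flat_prefix j Vb j"
      using True j(4) Vb by (simp add: flat_prefix_def)
    ultimately show ?thesis
      using span_face_x_axis_of_pair j(1,2) by blast
  next
    case False
    then have "t < j"
      using j by simp
    let ?X = "(window_ramp Cu)(j := Cu + real (k - 1) * V)"
    have "(vec_of ?X, vec_of (\<lambda>_. 1)) \<in> face"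
      using window_ramp_dip_in_face \<open>t < j\<close> j(1) by simp
    moreover have "\<forall>i\<in>{1..CARD('n)}. i \<noteq> j \<longrightarrow> ?X i = window_ramp Cu i"
      by simp
    moreover have "?X j \<noteq> window_ramp Cu j"
      using \<open>t < j\<close> k V by (simp add: window_ramp_after of_nat_diff algebra_simps)
    ultimately show ?thesis
      using span_face_x_axis_of_pair always_on_ramp_in_face j(1,2) by blast
  qed
qed

lemma span_face_x_ones: "((\<chi> i. 1), 0) \<in> span face"
proof -
  let ?c = "Cb - real k * V"
  have "(vec_of (window_ramp ?c), vec_of (\<lambda>_. 1)) \<in> face"
    using capacity by (intro window_ramp_in_face) auto
  from span_diff[OF span_base[OF this] span_base[OF always_on_ramp_in_face]]
  have "(vec_of (window_ramp ?c) - vec_of (window_ramp Cu), 0) \<in> span face"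
    by simp
  moreover have "vec_of (window_ramp ?c) - vec_of (window_ramp Cu) = (?c - Cu) *\<^sub>R (\<chi> i. 1)"
    unfolding vec_of_diff window_ramp_def by (simp add: vec_of_const vec_eq_iff)
  ultimately have "(?c - Cu) *\<^sub>R ((\<chi> i. 1), 0) \<in> span face"
    by simp
  moreover have "?c - Cu \<noteq> 0"
    using capacity by simp
  ultimately show ?thesis
    using span_scaleR_cancel by blast
qed

lemma ramp_inequality_UCP:
  assumes "p \<in> UCP ix L l Cb Cu V Vb"
  shows "xc ix p t - xc ix p (t - k) \<le> ramp_rhs Cu V Vb k m S t (yc ix p)"
proof -
  interpret ramp_window L k m Cu V Vb S "CARD('n)" l Cb "xc ix p" "yc ix p" t
    using assms t by unfold_locales (simp_all add: mem_UCP_iff)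
  show ?thesis
    by (rule ramp_inequality)
qed

theorem facet:
  "valid_facet (convex hull UCP ix L l Cb Cu V Vb)
     (\<lambda>p. xc ix p t - xc ix p (t - k)) (\<lambda>p. ramp_rhs Cu V Vb k m S t (yc ix p))"
proof (rule valid_facet_convex_hullI)
  let ?g = "\<lambda>p. xc ix p t - xc ix p (t - k) - ramp_rhs Cu V Vb k m S t (yc ix p)"
  show linear: "linear ?g"
    unfolding linear_iff ramp_rhs_def xc_def yc_def
    by (simp add: algebra_simps sum.distrib sum_distrib_left sum_subtractf scaleR_sum_right)
  have "(vec_of (\<lambda>_. 0), vec_of (\<lambda>_. 0)) \<in> UCP ix L l Cb Cu V Vb"
    unfolding vec_of_in_UCP_iff using Cu V Vb by (intro unit_commitment_always_off) auto
  then show "0 \<in> UCP ix L l Cb Cu V Vb"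
    by (simp add: vec_of_const zero_prod_def zero_vec_def)
  show "\<forall>p\<in>UCP ix L l Cb Cu V Vb. xc ix p t - xc ix p (t - k) \<le> ramp_rhs Cu V Vb k m S t (yc ix p)"
    using ramp_inequality_UCP by blast
  let ?p = "(vec_of (\<lambda>_. Cu), vec_of (\<lambda>_. 1))"
  show "?p \<in> UCP ix L l Cb Cu V Vb"
    unfolding vec_of_in_UCP_iff using Cu V Vb Vb_below_Cb
    by (intro unit_commitment_always_on) auto
  have "ramp_rhs Cu V Vb k m S t (yc ix ?p) = real k * V"
    using ramp_rhs_cong[of "yc ix ?p" "\<lambda>_. 1"] ramp_rhs_always_on by (simp add: yc_vec_of)
  then show "xc ix ?p t - xc ix ?p (t - k) \<noteq> ramp_rhs Cu V Vb k m S t (yc ix ?p)"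
    using window k V by (simp add: xc_vec_of)
  have "{v. ?g v = 0} \<subseteq> span face"
  proof (rule kernel_in_span_of_generators[OF linear])
    show "\<forall>p\<in>face. ?g p = 0"
      unfolding face_def by simp
    show "?g (x, 0) = x $ ix t - x $ ix (t - k)" for x
      by (simp add: xc_def yc_def ramp_rhs_def)
  qed (use span_face_x_axis span_face_x_ones span_face_y_axis in auto)
  then show "{v. xc ix v t - xc ix v (t - k) = ramp_rhs Cu V Vb k m S t (yc ix v)}
      \<subseteq> span {p \<in> UCP ix L l Cb Cu V Vb. xc ix p t - xc ix p (t - k) = ramp_rhs Cu V Vb k m S t (yc ix p)}"
    unfolding face_def by simp
qed

end

context ramp_params
begin

lemma ramp_rhs_reverse:
  assumes "m + 2 \<le> t" "t + k \<le> T"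
  shows "ramp_rhs Cu V Vb k m S (T + 1 - t) (\<lambda>j. Y (T + 1 - j)) =
    coeff m * Y (t - m - 1) + V * (\<Sum>i=1..m. Y (t - i)) + Vb * Y t - Cu * Y (t + k)
    - (\<Sum>s\<in>S. coeff s * (Y (t + s) - Y (t + s + 1)))"
proof -
  have "(\<Sum>i=1..m. Y (T + 1 - (T + 1 - t + i))) = (\<Sum>i=1..m. Y (t - i))"
    by (rule sum.cong) (use assms in auto)
  moreover have "(\<Sum>s\<in>S. coeff s * (Y (T + 1 - (T + 1 - t - s)) - Y (T + 1 - (T + 1 - t - s - 1))))
      = (\<Sum>s\<in>S. coeff s * (Y (t + s) - Y (t + s + 1)))"
  proof (rule sum.cong)
    fix s assume "s \<in> S"
    then have "T + 1 - (T + 1 - t - s) = t + s" "T + 1 - (T + 1 - t - s - 1) = t + s + 1"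
      using S_bounds[of s] assms k by auto
    then show "coeff s * (Y (T + 1 - (T + 1 - t - s)) - Y (T + 1 - (T + 1 - t - s - 1)))
        = coeff s * (Y (t + s) - Y (t + s + 1))"
      by simp
  qed simp
  moreover have "T + 1 - (T + 1 - t + m + 1) = t - m - 1" "T + 1 - (T + 1 - t) = t"
    "T + 1 - (T + 1 - t - k) = t + k"
    using assms by auto
  ultimately show ?thesis
    unfolding ramp_rhs_def by simp
qed

end

context ramp_facets
begin

lemma valid_facet_forward:
  assumes "k + 1 \<le> t" "t + m + 1 \<le> CARD('n)"
  shows "valid_facet (convex hull UCP ix L l Cb Cu V Vb)
     (\<lambda>p. xc ix p t - xc ix p (t - k)) (\<lambda>p. ramp_rhs Cu V Vb k m S t (yc ix p))"
proof -
  interpret ramp_facet ix L k m Cu V Vb S l Cb t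
    using assms by unfold_locales
  show ?thesis
    by (rule facet)
qed

lemma valid_facet_backward:
  assumes "m + 2 \<le> t" "t + k \<le> CARD('n)"
  shows "valid_facet (convex hull UCP ix L l Cb Cu V Vb) (\<lambda>p. xc ix p t - xc ix p (t + k))
     (\<lambda>p. coeff m * yc ix p (t - m - 1) + V * (\<Sum>i=1..m. yc ix p (t - i)) + Vb * yc ix p t
        - Cu * yc ix p (t + k) - (\<Sum>s\<in>S. coeff s * (yc ix p (t + s) - yc ix p (t + s + 1))))"
proof -
  let ?t = "CARD('n) + 1 - t"
  interpret ramp_facet ix L k m Cu V Vb S l Cb ?t
    using assms by unfold_locales auto
  have "reverse_time ` (convex hull UCP ix L l Cb Cu V Vb) = convex hull UCP ix L l Cb Cu V Vb"
    using convex_hull_linear_image[OF linear_reverse_time] reverse_time_UCP by simp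
  from valid_facet_linear_automorphism[OF linear_reverse_time inj_reverse_time this facet]
  have "valid_facet (convex hull UCP ix L l Cb Cu V Vb)
      (\<lambda>p. xc ix (reverse_time p) ?t - xc ix (reverse_time p) (?t - k))
      (\<lambda>p. ramp_rhs Cu V Vb k m S ?t (yc ix (reverse_time p)))" .
  moreover have "xc ix (reverse_time p) ?t - xc ix (reverse_time p) (?t - k) = xc ix p t - xc ix p (t + k)"
    for p
    using window assms by (simp add: xc_reverse_time)
  moreover have "ramp_rhs Cu V Vb k m S ?t (yc ix (reverse_time p))
      = ramp_rhs Cu V Vb k m S ?t (\<lambda>j. yc ix p (CARD('n) + 1 - j))" for p
    by (rule ramp_rhs_cong) (simp add: yc_reverse_time)
  ultimately show ?thesis
    using ramp_rhs_reverse[OF assms] by simp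
qed

end

theorem proposition11:
  fixes ix :: "nat \<Rightarrow> 'n::finite"
    and L l k m :: nat
    and Cb Cu V Vb :: real
    and S :: "nat set"
  defines "T \<equiv> CARD('n)"
  assumes ix: "bij_betw ix {1..T} UNIV"
    and L: "L \<ge> 1" and l: "l \<ge> 1"
    and Cb: "Cb > Cu" and Cu: "Cu > 0" and V: "V > 0" and VbV: "Vb + V \<le> Cb"
    and Vb1: "Cu < Vb" and Vb2: "Vb < Cu + V"
    and k: "1 \<le> k" "k \<le> T - 1" and kcap: "Cb - Cu - real k * V > 0"
    and m: "m \<le> k - 1"
    and S: "S \<subseteq> {s. s \<le> k - 1 \<and> int s \<le> int L - int m - 2}"
  shows
    "(\<forall>t. k + 1 \<le> t \<and> int t \<le> int T - int m - 1 \<longrightarrow>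
        valid_facet (convex hull (UCP ix L l Cb Cu V Vb))
          (\<lambda>p. xc ix p t - xc ix p (t - k))
          (\<lambda>p. (Cu + real (k - m) * V - Vb) * yc ix p (t + m + 1)
               + V * (\<Sum>i=1..m. yc ix p (t + i)) + Vb * yc ix p t - Cu * yc ix p (t - k)
               - (\<Sum>s\<in>S. (Cu + real (k - s) * V - Vb) * (yc ix p (t - s) - yc ix p (t - s - 1)))))
   \<and> (\<forall>t. m + 2 \<le> t \<and> t + k \<le> T \<longrightarrow>
        valid_facet (convex hull (UCP ix L l Cb Cu V Vb))
          (\<lambda>p. xc ix p t - xc ix p (t + k))
          (\<lambda>p. (Cu + real (k - m) * V - Vb) * yc ix p (t - m - 1)
               + V * (\<Sum>i=1..m. yc ix p (t - i)) + Vb * yc ix p t - Cu * yc ix p (t + k)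
               - (\<Sum>s\<in>S. (Cu + real (k - s) * V - Vb) * (yc ix p (t + s) - yc ix p (t + s + 1)))))"
proof -
  interpret ramp_facets ix L k m Cu V Vb S l Cb
    using ix V Vb1 Vb2 k(1) m S Cu kcap unfolding T_def by unfold_locales auto
  show ?thesis
    using valid_facet_forward valid_facet_backward unfolding T_def ramp_rhs_def by auto
qed

end
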